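(* Let $G=(V,E)$ be an undirected graph and $f:V\to\mathbb{Z}\cup\{-\infty\}$, $g:V\to\mathbb{Z}\cup\{+\infty\}$ with $f\le g$. An $(f,g)$-bounded orientation $D$ of $G$ is decreasingly minimal among the $(f,g)$-bounded orientations of $G$ if and only if there is no directed path in $D$ from a node $s$ to a node $t$ for which $\varrho_D(t)\ge\varrho_D(s)+2$, $\varrho_D(s)<g(s)$ and $\varrho_D(t)>f(t)$.
   Context: An orientation $D$ is $(f,g)$-bounded if $f(v)\le\varrho_D(v)\le g(v)$ for every $v\in V$, where $\varrho_D(v)$ is the number of arcs with head $v$. It is decreasingly minimal among a class of orientations if its in-degree vector $(\varrho_D(v))_v$ has largest component as small as possible within the class, within this second largest as small as possible, and so on. *)

theory Defs
  imports Complex_Main "HOL-Library.Multiset" "HOL-Library.Extended_Real"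
begin

text \<open>An undirected (multi)graph is given by a finite node set V, a finite set E of
edge names, and an endpoint map ep: edge e joins the nodes fst (ep e) and snd (ep e).
An orientation D assigns to each edge an arc (tail, head), which is either ep e or its swap.\<close>

definition graph :: "'a set \<Rightarrow> 'e set \<Rightarrow> ('e \<Rightarrow> 'a \<times> 'a) \<Rightarrow> bool" where
  "graph V E ep \<longleftrightarrow> finite V \<and> finite E \<and> (\<forall>e\<in>E. fst (ep e) \<in> V \<and> snd (ep e) \<in> V)"

definition is_orientation :: "'e set \<Rightarrow> ('e \<Rightarrow> 'a \<times> 'a) \<Rightarrow> ('e \<Rightarrow> 'a \<times> 'a) \<Rightarrow> bool" where
  "is_orientation E ep D \<longleftrightarrow> (\<forall>e\<in>E. D e = ep e \<or> D e = prod.swap (ep e))"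

definition indeg :: "'e set \<Rightarrow> ('e \<Rightarrow> 'a \<times> 'a) \<Rightarrow> 'a \<Rightarrow> nat" where
  "indeg E D v = card {e\<in>E. snd (D e) = v}"

definition fg_bounded ::
  "'a set \<Rightarrow> 'e set \<Rightarrow> ('a \<Rightarrow> ereal) \<Rightarrow> ('a \<Rightarrow> ereal) \<Rightarrow> ('e \<Rightarrow> 'a \<times> 'a) \<Rightarrow> bool" where
  "fg_bounded V E f g D \<longleftrightarrow>
     (\<forall>v\<in>V. f v \<le> ereal (real (indeg E D v)) \<and> ereal (real (indeg E D v)) \<le> g v)"

definition dec_sorted :: "'a set \<Rightarrow> ('a \<Rightarrow> nat) \<Rightarrow> nat list" where
  "dec_sorted V x = rev (sort (sorted_list_of_multiset (image_mset x (mset_set V))))"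

definition dec_less :: "'a set \<Rightarrow> ('a \<Rightarrow> nat) \<Rightarrow> ('a \<Rightarrow> nat) \<Rightarrow> bool" where
  "dec_less V x y \<longleftrightarrow> (dec_sorted V x, dec_sorted V y) \<in> lexord {(a, b). a < b}"

definition dec_min_fg_orientation ::
  "'a set \<Rightarrow> 'e set \<Rightarrow> ('e \<Rightarrow> 'a \<times> 'a) \<Rightarrow> ('a \<Rightarrow> ereal) \<Rightarrow> ('a \<Rightarrow> ereal)
     \<Rightarrow> ('e \<Rightarrow> 'a \<times> 'a) \<Rightarrow> bool" where
  "dec_min_fg_orientation V E ep f g D \<longleftrightarrow>
     is_orientation E ep D \<and> fg_bounded V E f g D \<and>
     \<not> (\<exists>D'. is_orientation E ep D' \<and> fg_bounded V E f g D' \<and>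
              dec_less V (indeg E D') (indeg E D))"

definition arcs :: "'e set \<Rightarrow> ('e \<Rightarrow> 'a \<times> 'a) \<Rightarrow> ('a \<times> 'a) set" where
  "arcs E D = D ` E"

definition dipath :: "'e set \<Rightarrow> ('e \<Rightarrow> 'a \<times> 'a) \<Rightarrow> 'a \<Rightarrow> 'a \<Rightarrow> bool" where
  "dipath E D s t \<longleftrightarrow> (s, t) \<in> (arcs E D)\<^sup>*"

end

theory Submission
  imports Defs
begin

text \<open>Decreasing minimality is controlled by the truncated sums
  \<open>\<Sum>\<^sub>v (x v - k)\<^sup>+\<close>: if x is decreasingly smaller than y, then one of these
  sums is smaller for x than for y.

  If D has an improving s-t path, reversing a shortest one moves one unit of in-degree
  from t to s. Since f and g are integral the new orientation is still (f,g)-bounded, and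
  since \<open>\<rho>(t) \<ge> \<rho>(s) + 2\<close> it is decreasingly smaller.

  Conversely, fix a level k and let Z be the set of nodes from which D reaches a node t
  with \<open>\<rho>(t) > k\<close> and \<open>\<rho>(t) > f(t)\<close>. No arc of D enters Z, so every
  orientation has at least as many arcs with head in Z. Without improving paths the nodes
  of Z below k are at their upper bound g and the nodes outside Z above k are at their
  lower bound f; hence no (f,g)-bounded orientation has a smaller truncated sum at level k.\<close>

definition excess :: "'a set \<Rightarrow> ('a \<Rightarrow> nat) \<Rightarrow> nat \<Rightarrow> nat" where
  "excess V x k = (\<Sum>v\<in>V. x v - k)"

definition improving_path ::
  "'e set \<Rightarrow> ('a \<Rightarrow> ereal) \<Rightarrow> ('a \<Rightarrow> ereal) \<Rightarrow> ('e \<Rightarrow> 'a \<times> 'a) \<Rightarrow> 'a \<Rightarrow> 'a \<Rightarrow> bool" where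
  "improving_path E f g D s t \<longleftrightarrow>
     dipath E D s t \<and> indeg E D t \<ge> indeg E D s + 2 \<and>
     ereal (real (indeg E D s)) < g s \<and> ereal (real (indeg E D t)) > f t"

subsection \<open>Decreasing order and truncated sums\<close>

lemma excess_eq_sum_list_dec_sorted:
  assumes "finite V"
  shows "excess V x k = sum_list (map (\<lambda>y. y - k) (dec_sorted V x))"
proof -
  let ?xs = "sort (sorted_list_of_multiset (image_mset x (mset_set V)))"
  have "sum_list (map (\<lambda>y. y - k) (dec_sorted V x)) = sum_list (map (\<lambda>y. y - k) ?xs)"
    by (simp add: dec_sorted_def rev_map[symmetric] sum_list_rev)
  also have "\<dots> = sum_mset (image_mset (\<lambda>y. y - k) (mset ?xs))"
    by (metis mset_map sum_mset_sum_list)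
  also have "\<dots> = excess V x k"
    by (simp add: excess_def sum_unfold_sum_mset image_mset.compositionality comp_def)
  finally show ?thesis by simp
qed

lemma length_dec_sorted: "length (dec_sorted V x) = card V"
  by (simp add: dec_sorted_def flip: size_mset)

lemma lexord_less_imp_truncated_sum_less:
  fixes xs ys :: "nat list"
  assumes "sorted_wrt (\<ge>) xs" "length xs = length ys" "(xs, ys) \<in> lexord {(a, b). a < b}"
  shows "\<exists>k. sum_list (map (\<lambda>x. x - k) xs) < sum_list (map (\<lambda>y. y - k) ys)"
proof -
  from assms(2,3) obtain u a b v w where "a < b" and xs: "xs = u @ a # v" and ys: "ys = u @ b # w"
    unfolding lexord_def by auto
  have "\<forall>x\<in>set v. x \<le> a"
    using assms(1) xs by (simp add: sorted_wrt_append)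
  then have "sum_list (map (\<lambda>x. x - a) v) = 0"
    by (induction v) auto
  with xs have "sum_list (map (\<lambda>x. x - a) xs) = sum_list (map (\<lambda>x. x - a) u)"
    by simp
  also have "\<dots> < sum_list (map (\<lambda>y. y - a) ys)"
    using \<open>a < b\<close> ys by simp
  finally show ?thesis ..
qed

lemma dec_less_imp_excess_less:
  assumes "finite V" "dec_less V x y"
  shows "\<exists>k. excess V x k < excess V y k"
proof -
  have "sorted_wrt (\<ge>) (dec_sorted V x)"
    by (simp add: dec_sorted_def sorted_wrt_rev)
  then show ?thesis
    using lexord_less_imp_truncated_sum_less[of "dec_sorted V x" "dec_sorted V y"] assms
    by (simp add: dec_less_def length_dec_sorted excess_eq_sum_list_dec_sorted)
qed

lemma dec_less_if_excess_le:
  assumes "finite V" "\<And>k. excess V x k \<le> excess V y k" "excess V x k\<^sub>0 < excess V y k\<^sub>0"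
  shows "dec_less V x y"
proof -
  have "dec_sorted V x \<noteq> dec_sorted V y"
    using assms(1,3) by (auto simp: excess_eq_sum_list_dec_sorted)
  moreover have "\<not> dec_less V y x"
    using dec_less_imp_excess_less[OF assms(1)] assms(2) leD by blast
  moreover have "(dec_sorted V x, dec_sorted V y) \<in> lexord {(a, b). a < b} \<or>
      dec_sorted V x = dec_sorted V y \<or> (dec_sorted V y, dec_sorted V x) \<in> lexord {(a, b). a < b}"
    by (rule lexord_linear) auto
  ultimately show ?thesis
    unfolding dec_less_def by blast
qed

lemma dec_less_move_unit:
  assumes "finite V" "s \<in> V" "t \<in> V"
    and "x' s = x s + 1" "x' t + 1 = x t" "x s + 2 \<le> x t"
    and "\<And>v. v \<noteq> s \<Longrightarrow> v \<noteq> t \<Longrightarrow> x' v = x v"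
  shows "dec_less V x' x"
proof -
  define W where "W = V - {s} - {t}"
  have "s \<noteq> t"
    using assms(4-6) by auto
  then have "t \<in> V - {s}"
    using assms(3) by simp
  then have split: "excess V y k = excess W y k + (y s - k) + (y t - k)" for y k
    unfolding excess_def W_def using assms(1)
    by (simp add: sum.remove[OF assms(1,2)] sum.remove[OF _ \<open>t \<in> V - {s}\<close>])
  have rest: "excess W x' k = excess W x k" for k
    unfolding excess_def W_def using assms(7) by (intro sum.cong) auto
  show ?thesis
  proof (rule dec_less_if_excess_le[OF assms(1), of _ _ "x t - 1"])
    show "excess V x' k \<le> excess V x k" for k
      using split[of x' k] split[of x k] rest[of k] assms(4-6) by arith
    show "excess V x' (x t - 1) < excess V x (x t - 1)"
      using split[of x' "x t - 1"] split[of x "x t - 1"] rest[of "x t - 1"] assms(4-6) by arith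
  qed
qed

lemma excess_le_split_subset:
  assumes "finite V" "Z \<subseteq> V" "(\<Sum>v\<in>Z. x v) \<le> (\<Sum>v\<in>Z. y v)"
    and in_Z: "\<And>v. v \<in> Z \<Longrightarrow> x v < k \<Longrightarrow> y v \<le> x v"
    and out_Z: "\<And>v. v \<in> V - Z \<Longrightarrow> k < x v \<Longrightarrow> x v \<le> y v"
  shows "excess V x k \<le> excess V y k"
proof -
  have "(\<Sum>v\<in>Z. x v - k) + (\<Sum>v\<in>Z. y v) \<le> (\<Sum>v\<in>Z. y v - k) + (\<Sum>v\<in>Z. x v)"
    unfolding sum.distrib[symmetric] using in_Z by (intro sum_mono) force
  with assms(3) have "(\<Sum>v\<in>Z. x v - k) \<le> (\<Sum>v\<in>Z. y v - k)"
    by linarith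
  moreover have "(\<Sum>v\<in>V - Z. x v - k) \<le> (\<Sum>v\<in>V - Z. y v - k)"
    using out_Z by (intro sum_mono) force
  ultimately show ?thesis
    using assms(1,2) by (simp add: excess_def sum.subset_diff[of Z V])
qed

lemma orientation_ends:
  assumes "is_orientation E ep D" "e \<in> E"
  shows "{fst (D e), snd (D e)} = {fst (ep e), snd (ep e)}"
  using assms by (cases "ep e") (auto simp: is_orientation_def)

lemma arcs_subset:
  assumes "graph V E ep" "is_orientation E ep D"
  shows "arcs E D \<subseteq> V \<times> V"
proof safe
  fix a b assume "(a, b) \<in> arcs E D"
  then obtain e where "e \<in> E" "D e = (a, b)"
    unfolding arcs_def by force
  then have "{a, b} = {fst (ep e), snd (ep e)}"
    using orientation_ends[OF assms(2)] by (metis fst_conv snd_conv)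
  also have "\<dots> \<subseteq> V"
    using assms(1) \<open>e \<in> E\<close> by (simp add: graph_def)
  finally show "a \<in> V" "b \<in> V"
    by simp_all
qed

lemma is_orientation_reverse:
  assumes "is_orientation E ep D"
  shows "is_orientation E ep (D(e := prod.swap (D e)))"
  using assms by (auto simp: is_orientation_def)

lemma indeg_remove_edge:
  assumes "finite E" "e \<in> E"
  shows "indeg E D v = indeg (E - {e}) D v + of_bool (snd (D e) = v)"
proof (cases "snd (D e) = v")
  case True
  then have "{e' \<in> E. snd (D e') = v} = insert e {e' \<in> E - {e}. snd (D e') = v}"
    using assms(2) by auto
  with True assms(1) show ?thesis
    by (simp add: indeg_def)
next
  case False
  then have "{e' \<in> E. snd (D e') = v} = {e' \<in> E - {e}. snd (D e') = v}"
    by auto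
  with False show ?thesis
    by (simp add: indeg_def)
qed

lemma indeg_reverse:
  assumes "finite E" "e \<in> E" "D e = (a, b)" "a \<noteq> b"
  shows "int (indeg E (D(e := (b, a))) v) = int (indeg E D v) + of_bool (v = a) - of_bool (v = b)"
proof -
  have "indeg (E - {e}) (D(e := (b, a))) v = indeg (E - {e}) D v"
    unfolding indeg_def by (intro arg_cong[where f = card]) auto
  then show ?thesis
    using indeg_remove_edge[OF assms(1,2), of D v] indeg_remove_edge[OF assms(1,2), of "D(e := (b, a))" v]
      assms(3,4) by auto
qed

lemma sum_indeg_eq_card_heads:
  assumes "finite E" "finite Z"
  shows "(\<Sum>v\<in>Z. indeg E D v) = card {e \<in> E. snd (D e) \<in> Z}"
proof -
  have "(\<Sum>v\<in>Z. indeg E D v) = card (\<Union>v\<in>Z. {e \<in> E. snd (D e) = v})"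
    unfolding indeg_def using assms by (subst card_UN_disjoint) auto
  also have "(\<Union>v\<in>Z. {e \<in> E. snd (D e) = v}) = {e \<in> E. snd (D e) \<in> Z}"
    by auto
  finally show ?thesis .
qed

text \<open>Without arcs entering Z, every edge with head in Z lies inside Z, and any orientation
  points such an edge into Z.\<close>

lemma sum_indeg_le_if_no_entering_arc:
  assumes "finite E" "finite Z" "is_orientation E ep D" "is_orientation E ep D'"
    and no_entering: "\<And>a b. (a, b) \<in> arcs E D \<Longrightarrow> b \<in> Z \<Longrightarrow> a \<in> Z"
  shows "(\<Sum>v\<in>Z. indeg E D v) \<le> (\<Sum>v\<in>Z. indeg E D' v)"
proof -
  have "{e \<in> E. snd (D e) \<in> Z} \<subseteq> {e \<in> E. fst (ep e) \<in> Z \<and> snd (ep e) \<in> Z}"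
  proof safe
    fix e assume "e \<in> E" "snd (D e) \<in> Z"
    moreover from this have "fst (D e) \<in> Z"
      using no_entering[of "fst (D e)" "snd (D e)"] by (force simp: arcs_def)
    ultimately show "fst (ep e) \<in> Z" "snd (ep e) \<in> Z"
      using orientation_ends[OF assms(3) \<open>e \<in> E\<close>] by (auto simp: doubleton_eq_iff)
  qed
  also have "\<dots> \<subseteq> {e \<in> E. snd (D' e) \<in> Z}"
    using orientation_ends[OF assms(4)] by (fastforce simp: doubleton_eq_iff)
  finally show ?thesis
    using assms(1,2) by (simp add: sum_indeg_eq_card_heads card_mono)
qed

subsection \<open>Reversing a shortest path\<close>

lemma relpow_avoiding_source:
  fixes R :: "('a \<times> 'a) set"
  assumes "(x, t) \<in> R ^^ j" "\<forall>i\<le>j. (s, t) \<notin> R ^^ i"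
  shows "(x, t) \<in> {(a, b) \<in> R. a \<noteq> s} ^^ j"
  using assms
proof (induction j arbitrary: x)
  case 0
  then show ?case by simp
next
  case (Suc j)
  obtain y where xy: "(x, y) \<in> R" and yt: "(y, t) \<in> R ^^ j"
    using relpow_Suc_D2[OF Suc.prems(1)] by blast
  have "x \<noteq> s"
    using Suc.prems(1) Suc.prems(2)[rule_format, of "Suc j"] by blast
  moreover have "(y, t) \<in> {(a, b) \<in> R. a \<noteq> s} ^^ j"
    using Suc.IH[OF yt] Suc.prems(2) by simp
  ultimately show ?case
    using xy by (blast intro: relpow_Suc_I2)
qed

lemma reverse_dipath:
  assumes "finite E" "is_orientation E ep D" "dipath E D s t" "s \<noteq> t"
  shows "\<exists>D'. is_orientation E ep D' \<and>
    (\<forall>v. int (indeg E D' v) = int (indeg E D v) + of_bool (v = s) - of_bool (v = t))"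
proof -
  obtain n where "(s, t) \<in> arcs E D ^^ n"
    using assms(3) by (auto simp: dipath_def rtrancl_power)
  with assms(2,4) show ?thesis
  proof (induction n arbitrary: D s rule: less_induct)
    case (less n D s)
    show ?case
    proof (cases "\<exists>i<n. (s, t) \<in> arcs E D ^^ i")
      case True
      then obtain i where "i < n" "(s, t) \<in> arcs E D ^^ i"
        by blast
      then show ?thesis
        by (rule less.IH[OF _ less.prems(1,2)])
    next
      case shortest: False
      obtain n' where n: "n = Suc n'"
        using less.prems(2,3) by (cases n) auto
      with less.prems(3) have "(s, t) \<in> arcs E D ^^ Suc n'"
        by simp
      then obtain x where "(s, x) \<in> arcs E D" and xt: "(x, t) \<in> arcs E D ^^ n'"
        by (blast dest: relpow_Suc_D2)
      then obtain e where e: "e \<in> E" "D e = (s, x)"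
        by (metis arcs_def imageE)
      have "s \<noteq> x"
        using xt shortest n lessI by blast
      define D1 where "D1 = D(e := (x, s))"
      have D1: "is_orientation E ep D1"
        using is_orientation_reverse[OF less.prems(1), of e] e by (simp add: D1_def)
      have indeg_D1: "int (indeg E D1 v) = int (indeg E D v) + of_bool (v = s) - of_bool (v = x)" for v
        unfolding D1_def by (rule indeg_reverse[of E e D, OF assms(1) e \<open>s \<noteq> x\<close>])
      show ?thesis
      proof (cases "x = t")
        case True
        with D1 indeg_D1 show ?thesis
          by (intro exI[of _ D1]) simp
      next
        case False
        text \<open>A shortest path leaves s only through e, so its remainder survives the reversal.\<close>
        have "\<forall>i\<le>n'. (s, t) \<notin> arcs E D ^^ i"
          using shortest n by auto
        with xt have path: "(x, t) \<in> {(a, b) \<in> arcs E D. a \<noteq> s} ^^ n'"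
          by (rule relpow_avoiding_source)
        have "{(a, b) \<in> arcs E D. a \<noteq> s} \<subseteq> arcs E D1"
        proof safe
          fix a b assume "(a, b) \<in> arcs E D" "a \<noteq> s"
          then obtain e' where "e' \<in> E" "D e' = (a, b)"
            by (auto simp: arcs_def)
          moreover have "e' \<noteq> e"
            using e \<open>D e' = (a, b)\<close> \<open>a \<noteq> s\<close> by auto
          ultimately show "(a, b) \<in> arcs E D1"
            unfolding arcs_def D1_def by (metis fun_upd_other image_eqI)
        qed
        then have "(x, t) \<in> arcs E D1 ^^ n'"
          using relpowp_mono[to_set, OF _ path] by blast
        moreover have "n' < n"
          using n by simp
        ultimately obtain D' where D': "is_orientation E ep D'"
          and indeg_D': "\<forall>v. int (indeg E D' v) = int (indeg E D1 v) + of_bool (v = x) - of_bool (v = t)"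
          using less.IH[OF _ D1 False] by blast
        have "int (indeg E D' v) = int (indeg E D v) + of_bool (v = s) - of_bool (v = t)" for v
          using indeg_D'[rule_format, of v] indeg_D1[of v] by simp
        with D' show ?thesis
          by blast
      qed
    qed
  qed
qed

subsection \<open>Improving paths\<close>

lemma ereal_Suc_le_if_less:
  assumes "ereal (real n) < g" "g = \<infinity> \<or> (\<exists>k::int. g = ereal (real_of_int k))"
  shows "ereal (real (Suc n)) \<le> g"
proof (cases "g = \<infinity>")
  case False
  with assms obtain k :: int where k: "g = ereal (real_of_int k)"
    by blast
  with assms(1) have "real n < real_of_int k"
    by simp
  then have "int n < k"
    by linarith
  then have "real (Suc n) \<le> real_of_int k"
    by linarith
  with k show ?thesis by simp
qed simp

lemma ereal_le_if_less_Suc: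
  assumes "f < ereal (real (Suc n))" "f = -\<infinity> \<or> (\<exists>k::int. f = ereal (real_of_int k))"
  shows "f \<le> ereal (real n)"
proof (cases "f = -\<infinity>")
  case False
  with assms obtain k :: int where k: "f = ereal (real_of_int k)"
    by blast
  with assms(1) have "real_of_int k < real (Suc n)"
    by simp
  then have "k < int (Suc n)"
    by linarith
  then have "real_of_int k \<le> real n"
    by linarith
  with k show ?thesis by simp
qed simp

lemma fg_bounded_move_unit:
  assumes "fg_bounded V E f g D" "s \<in> V" "t \<in> V"
    and g_int: "g s = \<infinity> \<or> (\<exists>k::int. g s = ereal (real_of_int k))"
    and f_int: "f t = -\<infinity> \<or> (\<exists>k::int. f t = ereal (real_of_int k))"
    and g_s: "ereal (real (indeg E D s)) < g s" and f_t: "f t < ereal (real (indeg E D t))"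
    and m'_s: "indeg E D' s = indeg E D s + 1" and m'_t: "indeg E D' t + 1 = indeg E D t"
    and m'_other: "\<And>v. v \<noteq> s \<Longrightarrow> v \<noteq> t \<Longrightarrow> indeg E D' v = indeg E D v"
  shows "fg_bounded V E f g D'"
  unfolding fg_bounded_def
proof safe
  let ?m = "indeg E D" and ?m' = "indeg E D'"
  fix v assume "v \<in> V"
  then have f_v: "f v \<le> ereal (real (?m v))" and g_v: "ereal (real (?m v)) \<le> g v"
    using assms(1) by (auto simp: fg_bounded_def)
  show "f v \<le> ereal (real (?m' v))"
  proof (cases "v = t")
    case True
    have "f t < ereal (real (Suc (?m' t)))"
      by (metis f_t m'_t Suc_eq_plus1)
    with True f_int show ?thesis
      by (blast intro: ereal_le_if_less_Suc)
  next
    case False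
    then have "?m v \<le> ?m' v"
      using m'_s m'_other by (cases "v = s") auto
    with f_v show ?thesis
      by (metis ereal_less_eq(3) of_nat_le_iff order_trans)
  qed
  show "ereal (real (?m' v)) \<le> g v"
  proof (cases "v = s")
    case True
    then show ?thesis
      using ereal_Suc_le_if_less[OF g_s g_int] m'_s by simp
  next
    case False
    then have "?m' v \<le> ?m v"
      using m'_t m'_other by (cases "v = t") auto
    with g_v show ?thesis
      by (metis ereal_less_eq(3) of_nat_le_iff order_trans)
  qed
qed

lemma improving_path_imp_dec_less:
  assumes "graph V E ep"
    and f_int: "\<forall>v\<in>V. f v = -\<infinity> \<or> (\<exists>k::int. f v = ereal (real_of_int k))"
    and g_int: "\<forall>v\<in>V. g v = \<infinity> \<or> (\<exists>k::int. g v = ereal (real_of_int k))"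
    and "is_orientation E ep D" "fg_bounded V E f g D"
    and "s \<in> V" "t \<in> V" "improving_path E f g D s t"
  shows "\<exists>D'. is_orientation E ep D' \<and> fg_bounded V E f g D' \<and> dec_less V (indeg E D') (indeg E D)"
proof -
  let ?m = "indeg E D"
  have fin: "finite V" "finite E"
    using assms(1) by (auto simp: graph_def)
  have "s \<noteq> t" and g_s: "ereal (real (?m s)) < g s" and f_t: "f t < ereal (real (?m t))"
    and m_st: "?m s + 2 \<le> ?m t"
    using assms(8) by (auto simp: improving_path_def)
  then obtain D' where D': "is_orientation E ep D'"
    and indeg_D': "\<And>v. int (indeg E D' v) = int (?m v) + of_bool (v = s) - of_bool (v = t)"
    using reverse_dipath[OF fin(2) assms(4), of s t] assms(8) by (auto simp: improving_path_def)
  let ?m' = "indeg E D'"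
  have m'_s: "?m' s = ?m s + 1" and m'_t: "?m' t + 1 = ?m t"
    using indeg_D'[of s] indeg_D'[of t] \<open>s \<noteq> t\<close> by auto
  have m'_other: "?m' v = ?m v" if "v \<noteq> s" "v \<noteq> t" for v
    using indeg_D'[of v] that by simp
  have "fg_bounded V E f g D'"
    using fg_bounded_move_unit[OF assms(5-7) _ _ g_s f_t m'_s m'_t] f_int g_int assms(6,7) m'_other
    by blast
  moreover have "dec_less V ?m' ?m"
    using dec_less_move_unit[OF fin(1) assms(6,7) m'_s m'_t m_st] m'_other by blast
  ultimately show ?thesis
    using D' by blast
qed

lemma excess_indeg_le_if_no_improving_path:
  assumes "graph V E ep" "is_orientation E ep D"
    and no_path: "\<And>s t. s \<in> V \<Longrightarrow> t \<in> V \<Longrightarrow> \<not> improving_path E f g D s t"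
    and "is_orientation E ep D'" "fg_bounded V E f g D'"
  shows "excess V (indeg E D) k \<le> excess V (indeg E D') k"
proof -
  let ?m = "indeg E D" and ?m' = "indeg E D'"
  have fin: "finite V" "finite E"
    using assms(1) by (auto simp: graph_def)
  define Z where "Z = {u \<in> V. \<exists>t\<in>V. dipath E D u t \<and> k < ?m t \<and> f t < ereal (real (?m t))}"
  have "Z \<subseteq> V"
    unfolding Z_def by blast
  have no_entering: "a \<in> Z" if arc: "(a, b) \<in> arcs E D" and head: "b \<in> Z" for a b
  proof -
    have "a \<in> V"
      using arcs_subset[OF assms(1,2)] arc by blast
    with arc head show ?thesis
      unfolding Z_def dipath_def by (blast intro: converse_rtrancl_into_rtrancl)
  qed
  have "finite Z"
    using \<open>Z \<subseteq> V\<close> fin(1) by (rule finite_subset)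
  then have "(\<Sum>v\<in>Z. ?m v) \<le> (\<Sum>v\<in>Z. ?m' v)"
    by (rule sum_indeg_le_if_no_entering_arc[OF fin(2) _ assms(2,4) no_entering])
  moreover have "?m' v \<le> ?m v" if "v \<in> Z" "?m v < k" for v
  proof -
    obtain t where "t \<in> V" "dipath E D v t" "k < ?m t" "f t < ereal (real (?m t))"
      using \<open>v \<in> Z\<close> unfolding Z_def by blast
    moreover have "v \<in> V"
      using \<open>v \<in> Z\<close> \<open>Z \<subseteq> V\<close> by blast
    ultimately have "\<not> ereal (real (?m v)) < g v"
      using no_path[of v t] \<open>?m v < k\<close> unfolding improving_path_def by auto
    moreover have "ereal (real (?m' v)) \<le> g v"
      using assms(5) \<open>v \<in> V\<close> by (auto simp: fg_bounded_def)
    ultimately have "ereal (real (?m' v)) \<le> ereal (real (?m v))"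
      by (meson not_less order_trans)
    then show ?thesis by simp
  qed
  moreover have "?m v \<le> ?m' v" if "v \<in> V - Z" "k < ?m v" for v
  proof -
    have "dipath E D v v"
      by (simp add: dipath_def)
    with that have "\<not> f v < ereal (real (?m v))"
      unfolding Z_def by blast
    moreover have "f v \<le> ereal (real (?m' v))"
      using assms(5) that(1) by (auto simp: fg_bounded_def)
    ultimately have "ereal (real (?m v)) \<le> ereal (real (?m' v))"
      by (meson not_less order_trans)
    then show ?thesis by simp
  qed
  ultimately show ?thesis
    using excess_le_split_subset[OF fin(1) \<open>Z \<subseteq> V\<close>] by blast
qed

lemma dec_min_if_no_improving_path:
  assumes "graph V E ep" "is_orientation E ep D" "fg_bounded V E f g D"
    and no_path: "\<And>s t. s \<in> V \<Longrightarrow> t \<in> V \<Longrightarrow> \<not> improving_path E f g D s t"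
  shows "dec_min_fg_orientation V E ep f g D"
proof -
  have "\<not> dec_less V (indeg E D') (indeg E D)"
    if "is_orientation E ep D'" "fg_bounded V E f g D'" for D'
  proof
    assume "dec_less V (indeg E D') (indeg E D)"
    moreover have "finite V"
      using assms(1) by (simp add: graph_def)
    ultimately obtain k where "excess V (indeg E D') k < excess V (indeg E D) k"
      using dec_less_imp_excess_less by blast
    moreover have "excess V (indeg E D) k \<le> excess V (indeg E D') k"
      using excess_indeg_le_if_no_improving_path[OF assms(1,2) no_path that] by blast
    ultimately show False
      by simp
  qed
  with assms(2,3) show ?thesis
    unfolding dec_min_fg_orientation_def by blast
qed

theorem theorem5p1:
  fixes V :: "'a set" and E :: "'e set" and ep D :: "'e \<Rightarrow> 'a \<times> 'a"
    and f g :: "'a \<Rightarrow> ereal"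
  assumes "graph V E ep"
    and "\<forall>v\<in>V. f v = -\<infinity> \<or> (\<exists>k::int. f v = ereal (real_of_int k))"
    and "\<forall>v\<in>V. g v = \<infinity> \<or> (\<exists>k::int. g v = ereal (real_of_int k))"
    and "\<forall>v\<in>V. f v \<le> g v"
    and "is_orientation E ep D"
    and "fg_bounded V E f g D"
  shows "dec_min_fg_orientation V E ep f g D \<longleftrightarrow>
    \<not> (\<exists>s\<in>V. \<exists>t\<in>V. dipath E D s t \<and>
          indeg E D t \<ge> indeg E D s + 2 \<and>
          ereal (real (indeg E D s)) < g s \<and>
          ereal (real (indeg E D t)) > f t)"
proof -
  have "dec_min_fg_orientation V E ep f g D \<longleftrightarrow> \<not> (\<exists>s\<in>V. \<exists>t\<in>V. improving_path E f g D s t)"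
  proof
    assume "dec_min_fg_orientation V E ep f g D"
    then show "\<not> (\<exists>s\<in>V. \<exists>t\<in>V. improving_path E f g D s t)"
      using improving_path_imp_dec_less[OF assms(1-3,5,6)]
      unfolding dec_min_fg_orientation_def by blast
  next
    assume "\<not> (\<exists>s\<in>V. \<exists>t\<in>V. improving_path E f g D s t)"
    then show "dec_min_fg_orientation V E ep f g D"
      using dec_min_if_no_improving_path[OF assms(1,5,6)] by blast
  qed
  then show ?thesis
    unfolding improving_path_def .
qed

end
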